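(* Let $u\in U$, $w'\in W$, and let $y_1,\dots,y_N\in F$ and $\pi_1,\dots,\pi_{N+1}\in W$ be produced by the decomposition procedure below. Define $\sigma_{N+1}=w'$ and, for $k=N,\dots,1$, $\sigma_k=\sigma_{k+1}$ if step $k$ is of type A and $\sigma_k=s_{i_k}\sigma_{k+1}$ if step $k$ is of type B; equivalently \[ \sigma_k=\Big[\prod_{j=k}^{N}\begin{cases}1&\text{if step }j\text{ is of type A}\\ s_{i_j}&\text{if step }j\text{ is of type B}\end{cases}\Big]w' . \] Then for every $k=1,\dots,N+1$, as elements of $W$, \[ \pi_k=s_{i_N}s_{i_{N-1}}\cdots s_{i_k}\,\sigma_k , \] and in particular $\pi_1=w_0\sigma_1$.
   Context: Let $F$ be a non-archimedean local field with ring of integers $\mathcal{O}$, maximal ideal $\mathfrak{p}$, unit group $\mathcal{O}^\times$, residue field $\mathbb{F}_q$. Let $G$ be a split connected reductive group over $F$ with split maximal torus $T$, irreducible root system $\Phi$, positive roots $\Phi^+$, $\Phi^-=-\Phi^+$, simple roots $\alpha_i$, coroots $\alpha^\vee$, Weyl group $W$ with simple reflections $s_i$ acting on $\Phi$. Let $n\ge1$ with $q\equiv1\pmod{2n}$ and $\widetilde G$ an $n$-fold metaplectic cover of $G(F)$ (central extension by $\mu_n$); $\widetilde H$ = preimage of $H$. The cover splits over $K=G(\mathcal{O})$ and unipotent subgroups. Steinberg generators $e_\alpha(x)$, $w_\alpha(x)=e_\alpha(x)e_{-\alpha}(-x^{-1})$, $h_\alpha(x)=w_\alpha(x)w_\alpha(-1)\in\widetilde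 T$, with $h_\alpha(x)e_\beta(y)h_\alpha(x)^{-1}=e_\beta(x^{\langle\beta,\alpha^\vee\rangle}y)$. $U^+$ (resp. $U=U^-$) is generated by $e_\alpha(x)$ (resp. $e_{-\alpha}(x)$), $\alpha\in\Phi^+$, $x\in F$. $J$ = preimage of $B^-(\mathbb{F}_q)$ under $G(\mathcal{O})\to G(\mathbb{F}_q)$. Weyl elements are identified with fixed representatives in $K$ ($s_i\leftrightarrow w_{\alpha_i}(-1)$; $s_\alpha=vs_iv^{-1}$ if $\alpha=v(\alpha_i)\in\Phi^+$). Fix a reduced word $w_0=s_{i_1}\cdots s_{i_N}$ of the longest element, $\gamma_j=s_{i_N}\cdots s_{i_{j+1}}(\alpha_{i_j})$, so $\Phi^+=\{\gamma_1,\dots,\gamma_N\}$. For $0\le k\le N$, $G_k$ = set of products $\big(\prod_{j=1}^{k-1}e_{-\gamma_j}(t_j)\big)\big(\prod_{j=k+1}^N e_{\gamma_j}(t_j)\big)$, $t_j\in F$. Fact: for $z\in F$, $g\in G_k$ there is a unique $g'\in G_k$ with $e_{-\gamma_k}(z)g=g'e_{-\gamma_k}(z)$. Decomposition procedure. Write $u=e_{-\gamma_1}(x_1)\cdots e_{-\gamma_N}(x_N)$ ($x_j\in F$ unique). Put $p_{N+1}=h_{N+1}=j_{N+1}=1$, $\pi_{N+1}=w'$, $t_N=0$. For $k=N,N-1,\dots,1$: the element $p_{k+1}$ has the form $e_{-\gamma_k}(t_k)p'_k$ with $t_k\in F$, $p'_k\in G_k$ uniquely determined; let $p''_k\in G_k$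 satisfy $e_{-\gamma_k}(x_k+t_k)p'_k=p''_ke_{-\gamma_k}(x_k+t_k)$; define $y_k\in F$ by $h_{k+1}^{-1}e_{-\gamma_k}(x_k+t_k)h_{k+1}=e_{-\gamma_k}(y_k)$. Step $k$ is of type A if $y_k\notin\mathcal{O}$, or $y_k\in\mathcal{O}^\times$ and $\pi_{k+1}^{-1}(\gamma_k)\in\Phi^-$; otherwise ($y_k\in\mathfrak{p}$, or $y_k\in\mathcal{O}^\times$ and $\pi_{k+1}^{-1}(\gamma_k)\in\Phi^+$) of type B. Type A: $h_k=h_{k+1}h_{\gamma_k}(y_k^{-1})$, $\pi_k=s_{\gamma_k}\pi_{k+1}$, $j_k=e_{\pi_{k+1}^{-1}(\gamma_k)}(y_k^{-1})j_{k+1}$, $p_k=p''_k\,h_ke_{\gamma_k}(y_k)h_k^{-1}$. Type B: $h_k=h_{k+1}$, $\pi_k=\pi_{k+1}$, $j_k=e_{-\pi_{k+1}^{-1}(\gamma_k)}(y_k)j_{k+1}$, $p_k=p''_k$. *)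

theory Defs
  imports "HOL-Analysis.Analysis"
begin

definition refl :: "'a::real_inner \<Rightarrow> 'a \<Rightarrow> 'a" where
  "refl a x = x - (2 * (x \<bullet> a) / (a \<bullet> a)) *\<^sub>R a"

definition root_system :: "'a::euclidean_space set \<Rightarrow> bool" where
  "root_system R \<longleftrightarrow> finite R \<and> 0 \<notin> R \<and> span R = UNIV
     \<and> (\<forall>a\<in>R. refl a ` R = R)
     \<and> (\<forall>a\<in>R. \<forall>b\<in>R. 2 * (b \<bullet> a) / (a \<bullet> a) \<in> \<int>)
     \<and> (\<forall>a\<in>R. \<forall>c::real. c *\<^sub>R a \<in> R \<longrightarrow> c = 1 \<or> c = -1)"

definition irreducible_rs :: "'a::euclidean_space set \<Rightarrow> bool" where
  "irreducible_rs R \<longleftrightarrow> \<not> (\<exists>A B. A \<noteq> {} \<and> B \<noteq> {} \<and> A \<union> B = R \<and> A \<inter> B = {}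
                                 \<and> (\<forall>a\<in>A. \<forall>b\<in>B. a \<bullet> b = 0))"

definition simple_system :: "'a::euclidean_space set \<Rightarrow> ('i::finite \<Rightarrow> 'a) \<Rightarrow> bool" where
  "simple_system R alpha \<longleftrightarrow> inj alpha \<and> range alpha \<subseteq> R \<and> independent (range alpha)
     \<and> (\<forall>b\<in>R. \<exists>c. b = (\<Sum>i\<in>UNIV. c i *\<^sub>R alpha i)
                  \<and> ((\<forall>i. c i \<ge> 0) \<or> (\<forall>i. c i \<le> 0)))"

definition pos_roots :: "'a::euclidean_space set \<Rightarrow> ('i::finite \<Rightarrow> 'a) \<Rightarrow> 'a set" where
  "pos_roots R alpha = {b\<in>R. \<exists>c. b = (\<Sum>i\<in>UNIV. c i *\<^sub>R alpha i) \<and> (\<forall>i. c i \<ge> 0)}"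

definition wprod :: "('i \<Rightarrow> 'a::real_inner) \<Rightarrow> 'i list \<Rightarrow> 'a \<Rightarrow> 'a" where
  "wprod alpha xs = foldr (\<lambda>j w. refl (alpha j) \<circ> w) xs id"

definition weyl :: "('i \<Rightarrow> 'a::real_inner) \<Rightarrow> ('a \<Rightarrow> 'a) set" where
  "weyl alpha = range (wprod alpha)"

definition wlength :: "('i \<Rightarrow> 'a::real_inner) \<Rightarrow> ('a \<Rightarrow> 'a) \<Rightarrow> nat" where
  "wlength alpha w = (LEAST n. \<exists>xs. length xs = n \<and> wprod alpha xs = w)"

definition reduced_word :: "('i \<Rightarrow> 'a::real_inner) \<Rightarrow> 'i list \<Rightarrow> bool" where
  "reduced_word alpha xs \<longleftrightarrow> length xs = wlength alpha (wprod alpha xs)"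

definition longest_element :: "('i \<Rightarrow> 'a::real_inner) \<Rightarrow> ('a \<Rightarrow> 'a) \<Rightarrow> bool" where
  "longest_element alpha w0 \<longleftrightarrow> w0 \<in> weyl alpha \<and> (\<forall>v\<in>weyl alpha. wlength alpha v \<le> wlength alpha w0)"

text \<open>For a word ii 1, ..., ii N: the product s_{i_b} s_{i_(b-1)} ... s_{i_a} (empty if a > b).\<close>
definition rprod :: "('i \<Rightarrow> 'a::real_inner) \<Rightarrow> (nat \<Rightarrow> 'i) \<Rightarrow> nat \<Rightarrow> nat \<Rightarrow> 'a \<Rightarrow> 'a" where
  "rprod alpha ii a b = wprod alpha (rev (map ii [a..<Suc b]))"

definition gamma :: "('i \<Rightarrow> 'a::real_inner) \<Rightarrow> (nat \<Rightarrow> 'i) \<Rightarrow> nat \<Rightarrow> nat \<Rightarrow> 'a" where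
  "gamma alpha ii N j = rprod alpha ii (Suc j) N (alpha (ii j))"

end

theory Submission
  imports Defs
begin

(* Since s_gamma_k is the conjugate of s_(i_k) by s_(i_N) ... s_(i_(k+1)), a downward induction
   on k shows pi_k = s_(i_N) ... s_(i_k) sigma_k: a type A step multiplies both sides on the left
   by s_gamma_k, a type B step inserts s_(i_k) s_(i_k) = 1.  For k = 1 the prefix is the inverse
   of w0, and w0 is an involution: a longest element sends every simple root to a negative root
   (otherwise the deletion condition would make w0 s_i longer than w0), so -w0 and hence w0^2
   preserve the positive roots, and the only element of W doing so is the identity. *)

lemma refl_zero: "refl 0 x = x"
  by (simp add: refl_def)

lemma refl_refl [simp]: "refl a (refl a x) = x"
  by (cases "a = 0") (simp_all add: refl_def refl_zero inner_diff_left algebra_simps)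

lemma refl_o_refl: "refl a \<circ> refl a = id"
  by (rule ext) simp

lemma refl_self: "refl a a = - a"
  by (cases "a = 0") (simp_all add: refl_def refl_zero scaleR_2)

lemma linear_refl: "linear (refl a)"
  by (rule linearI) (simp_all add: refl_def inner_add_left algebra_simps add_divide_distrib)

lemma inner_refl_refl: "refl a x \<bullet> refl a y = x \<bullet> y"
  by (cases "a = 0")
     (simp_all add: refl_def refl_zero inner_diff_left inner_diff_right inner_commute algebra_simps)

lemma refl_conjugate:
  assumes "linear w" and "\<And>x y. w x \<bullet> w y = x \<bullet> y"
  shows "refl (w a) \<circ> w = w \<circ> refl a"
  using assms by (intro ext) (simp add: refl_def linear_diff linear_scale)

lemma wprod_Nil [simp]: "wprod alpha [] = id"
  by (simp add: wprod_def)

lemma wprod_Cons [simp]: "wprod alpha (j # xs) = refl (alpha j) \<circ> wprod alpha xs"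
  by (simp add: wprod_def)

lemma wprod_append: "wprod alpha (xs @ ys) = wprod alpha xs \<circ> wprod alpha ys"
  by (induction xs) auto

lemma wprod_snoc: "wprod alpha (xs @ [i]) = wprod alpha xs \<circ> refl (alpha i)"
  by (simp add: wprod_append)

lemma linear_wprod: "linear (wprod alpha xs)"
proof (induction xs)
  case Nil
  show ?case using linear_id by (simp add: id_def)
next
  case (Cons x xs)
  show ?case using linear_compose[OF Cons.IH linear_refl] by (simp add: o_def)
qed

lemma inner_wprod_wprod: "wprod alpha xs x \<bullet> wprod alpha xs y = x \<bullet> y"
  by (induction xs arbitrary: x y) (auto simp: inner_refl_refl)

lemma wprod_minus: "wprod alpha xs (- x) = - wprod alpha xs x"
  using linear_neg[OF linear_wprod] by blast

lemma wprod_conjugate: "refl (wprod alpha xs a) \<circ> wprod alpha xs = wprod alpha xs \<circ> refl a"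
  by (rule refl_conjugate[OF linear_wprod inner_wprod_wprod])

lemma wprod_rev_o_wprod: "wprod alpha (rev xs) \<circ> wprod alpha xs = id"
proof (induction xs)
  case (Cons x xs)
  have "wprod alpha (rev (x # xs)) \<circ> wprod alpha (x # xs) =
        wprod alpha (rev xs) \<circ> (refl (alpha x) \<circ> refl (alpha x)) \<circ> wprod alpha xs"
    by (simp add: wprod_append o_assoc)
  also have "\<dots> = id"
    by (simp only: refl_o_refl o_id Cons.IH)
  finally show ?case .
qed simp

lemma wlength_le: "wlength alpha (wprod alpha xs) \<le> length xs"
  unfolding wlength_def by (rule Least_le) blast

lemma obtain_minimal_word:
  assumes "w \<in> weyl alpha"
  obtains zs where "length zs = wlength alpha w" "wprod alpha zs = w"
proof -
  obtain xs where "wprod alpha xs = w"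
    using assms by (auto simp: weyl_def)
  then have "\<exists>n zs. length zs = n \<and> wprod alpha zs = w"
    by blast
  then have "\<exists>zs. length zs = wlength alpha w \<and> wprod alpha zs = w"
    unfolding wlength_def by (rule LeastI_ex)
  then show ?thesis
    using that by blast
qed

locale based_root_system =
  fixes R :: "'a::euclidean_space set" and alpha :: "'i::finite \<Rightarrow> 'a"
  assumes root_system: "root_system R" and simple_system: "simple_system R alpha"
begin

abbreviation "Pos \<equiv> pos_roots R alpha"

lemma zero_not_root: "0 \<notin> R"
  and refl_image_roots: "a \<in> R \<Longrightarrow> refl a ` R = R"
  and root_multiples: "a \<in> R \<Longrightarrow> c *\<^sub>R a \<in> R \<Longrightarrow> c = 1 \<or> c = -1"
  using root_system unfolding root_system_def by auto

lemma simple_root: "alpha i \<in> R"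
  and independent_simple_roots: "independent (range alpha)"
  and root_sign_coeffs:
    "b \<in> R \<Longrightarrow> \<exists>c. b = (\<Sum>i\<in>UNIV. c i *\<^sub>R alpha i) \<and> ((\<forall>i. c i \<ge> 0) \<or> (\<forall>i. c i \<le> 0))"
  using simple_system unfolding simple_system_def by auto

lemma inj_alpha: "inj alpha"
  using simple_system unfolding simple_system_def by auto

lemma simple_coeffs_zero:
  assumes "(\<Sum>i\<in>UNIV. e i *\<^sub>R alpha i) = 0"
  shows "e i = 0"
proof -
  have indep: "c v = 0" if "(\<Sum>v\<in>range alpha. c v *\<^sub>R v) = 0" "v \<in> range alpha" for c v
    using independent_explicit[THEN iffD1, OF independent_simple_roots] that by blast
  have "(\<Sum>v\<in>range alpha. e (inv alpha v) *\<^sub>R v) = 0"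
    using assms by (simp add: sum.reindex[OF inj_alpha] inv_f_f[OF inj_alpha])
  then have "e (inv alpha (alpha i)) = 0"
    by (rule indep) simp
  then show ?thesis
    by (simp add: inv_f_f[OF inj_alpha])
qed

lemma simple_coeffs_unique:
  assumes "(\<Sum>i\<in>UNIV. c i *\<^sub>R alpha i) = (\<Sum>i\<in>UNIV. d i *\<^sub>R alpha i)"
  shows "c = d"
proof -
  have "(\<Sum>i\<in>UNIV. (c i - d i) *\<^sub>R alpha i) = 0"
    using assms by (simp add: scaleR_diff_left sum_subtractf)
  then have "c i - d i = 0" for i
    by (rule simple_coeffs_zero)
  then show ?thesis
    by auto
qed

lemma sum_single_simple_root: "(\<Sum>j\<in>UNIV. (if j = i then k else 0) *\<^sub>R alpha j) = k *\<^sub>R alpha i"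
proof -
  have "(\<Sum>j\<in>UNIV. (if j = i then k else 0) *\<^sub>R alpha j) = (\<Sum>j\<in>UNIV. if j = i then k *\<^sub>R alpha j else 0)"
    by (intro sum.cong) simp_all
  then show ?thesis
    by simp
qed

lemma pos_rootI: "b \<in> R \<Longrightarrow> b = (\<Sum>i\<in>UNIV. c i *\<^sub>R alpha i) \<Longrightarrow> \<forall>i. c i \<ge> 0 \<Longrightarrow> b \<in> Pos"
  by (auto simp: pos_roots_def)

lemma pos_root_in_roots: "b \<in> Pos \<Longrightarrow> b \<in> R"
  by (simp add: pos_roots_def)

lemma simple_root_pos: "alpha i \<in> Pos"
  by (rule pos_rootI[OF simple_root sum_single_simple_root[of i 1, simplified, symmetric]]) simp

lemma uminus_root: "b \<in> R \<Longrightarrow> - b \<in> R"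
  using refl_image_roots refl_self by (metis image_eqI)

lemma root_pos_or_neg: "b \<in> R \<Longrightarrow> b \<in> Pos \<or> - b \<in> Pos"
proof -
  assume b: "b \<in> R"
  obtain c where c: "b = (\<Sum>i\<in>UNIV. c i *\<^sub>R alpha i)" "(\<forall>i. c i \<ge> 0) \<or> (\<forall>i. c i \<le> 0)"
    using root_sign_coeffs[OF b] by blast
  have "- b = (\<Sum>i\<in>UNIV. (- c i) *\<^sub>R alpha i)"
    unfolding c(1) scaleR_minus_left sum_negf ..
  then show ?thesis
    using c b uminus_root[OF b] by (metis neg_0_le_iff_le pos_rootI)
qed

lemma not_pos_and_neg: "b \<in> Pos \<Longrightarrow> - b \<notin> Pos"
proof
  assume "b \<in> Pos" "- b \<in> Pos"
  then obtain c d where c: "b = (\<Sum>i\<in>UNIV. c i *\<^sub>R alpha i)" "\<forall>i. c i \<ge> 0" "b \<in> R"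
    and d: "- b = (\<Sum>i\<in>UNIV. d i *\<^sub>R alpha i)" "\<forall>i. d i \<ge> 0"
    by (auto simp: pos_roots_def)
  have "(\<Sum>i\<in>UNIV. (c i + d i) *\<^sub>R alpha i) = 0"
    by (simp add: scaleR_add_left sum.distrib flip: c(1) d(1))
  then have "\<forall>i. c i = 0"
    using c(2) d(2) simple_coeffs_zero by (metis add_nonneg_eq_0_iff)
  then show False using c zero_not_root by simp
qed

lemma wprod_root: "b \<in> R \<Longrightarrow> wprod alpha xs b \<in> R"
  by (induction xs arbitrary: b) (use refl_image_roots[OF simple_root] in auto)

lemma refl_simple_root_pos:
  assumes b: "b \<in> Pos" and "b \<noteq> alpha i"
  shows "refl (alpha i) b \<in> Pos"
proof (rule ccontr)
  assume not_pos: "refl (alpha i) b \<notin> Pos"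
  obtain c where c: "b = (\<Sum>j\<in>UNIV. c j *\<^sub>R alpha j)" "\<forall>j. c j \<ge> 0" "b \<in> R"
    using b by (auto simp: pos_roots_def)
  define k where "k = 2 * (b \<bullet> alpha i) / (alpha i \<bullet> alpha i)"
  have sb_root: "refl (alpha i) b \<in> R"
    using refl_image_roots[OF simple_root] c(3) by blast
  have "refl (alpha i) b = b - k *\<^sub>R alpha i"
    by (simp add: refl_def k_def)
  also have "\<dots> = (\<Sum>j\<in>UNIV. (c j - (if j = i then k else 0)) *\<^sub>R alpha j)"
    unfolding c(1) scaleR_diff_left sum_subtractf sum_single_simple_root ..
  finally have sb: "refl (alpha i) b = (\<Sum>j\<in>UNIV. (c j - (if j = i then k else 0)) *\<^sub>R alpha j)" .
  obtain c' where c': "refl (alpha i) b = (\<Sum>j\<in>UNIV. c' j *\<^sub>R alpha j)"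
      "(\<forall>j. c' j \<ge> 0) \<or> (\<forall>j. c' j \<le> 0)"
    using root_sign_coeffs[OF sb_root] by blast
  have c'_eq: "c' = (\<lambda>j. c j - (if j = i then k else 0))"
    by (rule simple_coeffs_unique[OF trans[OF c'(1)[symmetric] sb]])
  have c'_nonpos: "\<forall>j. c' j \<le> 0"
    using c' not_pos pos_rootI[OF sb_root] by blast
  have "c j = 0" if "j \<noteq> i" for j
  proof -
    have "c' j = c j" using c'_eq that by simp
    then show ?thesis using c'_nonpos c(2) by (metis order_antisym)
  qed
  then have "b = (\<Sum>j\<in>UNIV. (if j = i then c i else 0) *\<^sub>R alpha j)"
    unfolding c(1) by (intro sum.cong refl) simp
  then have b_eq: "b = c i *\<^sub>R alpha i"
    by (simp only: sum_single_simple_root)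
  then have "c i = 1 \<or> c i = -1"
    using root_multiples[OF simple_root] c(3) by simp
  then have "c i = 1"
    using c(2) by (metis le_minus_one_simps(3))
  then show False
    using b_eq \<open>b \<noteq> alpha i\<close> by simp
qed

lemma deletion_condition:
  "wprod alpha xs (alpha i) \<notin> Pos \<Longrightarrow>
   \<exists>ys. length ys < length xs \<and> wprod alpha ys = wprod alpha xs \<circ> refl (alpha i)"
proof (induction xs)
  case Nil
  then show ?case using simple_root_pos by simp
next
  case (Cons x xs)
  show ?case
  proof (cases "wprod alpha xs (alpha i) \<in> Pos")
    case False
    then obtain ys where "length ys < length xs" "wprod alpha ys = wprod alpha xs \<circ> refl (alpha i)"
      using Cons.IH by blast
    then show ?thesis by (intro exI[of _ "x # ys"]) (simp add: o_assoc)
  next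
    case True
    have "refl (alpha x) (wprod alpha xs (alpha i)) \<notin> Pos"
      using Cons.prems by simp
    then have "wprod alpha xs (alpha i) = alpha x"
      using refl_simple_root_pos[OF True] by blast
    then have "wprod alpha xs \<circ> refl (alpha i) = refl (alpha x) \<circ> wprod alpha xs"
      using wprod_conjugate[of alpha xs "alpha i"] by simp
    then have "wprod alpha (x # xs) \<circ> refl (alpha i) = (refl (alpha x) \<circ> refl (alpha x)) \<circ> wprod alpha xs"
      by (simp only: wprod_Cons o_assoc[symmetric])
    then have "wprod alpha (x # xs) \<circ> refl (alpha i) = wprod alpha xs"
      by (simp only: refl_o_refl id_o)
    moreover have "length xs < length (x # xs)"
      by simp
    ultimately show ?thesis
      by metis
  qed
qed

lemma minimal_word_snoc_pos:
  assumes "length (xs @ [i]) = wlength alpha (wprod alpha (xs @ [i]))"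
  shows "wprod alpha xs (alpha i) \<in> Pos"
proof (rule ccontr)
  assume "wprod alpha xs (alpha i) \<notin> Pos"
  then obtain ys where "length ys < length xs" "wprod alpha ys = wprod alpha (xs @ [i])"
    using deletion_condition by (auto simp: wprod_snoc)
  then show False using assms wlength_le[of alpha ys] by simp
qed

lemma weyl_pos_roots_eq_id:
  assumes "w \<in> weyl alpha" and pos: "\<forall>b\<in>Pos. w b \<in> Pos"
  shows "w = id"
proof -
  obtain zs where zs: "length zs = wlength alpha w" "wprod alpha zs = w"
    using obtain_minimal_word assms(1) by blast
  show ?thesis
  proof (cases zs rule: rev_exhaust)
    case Nil
    then show ?thesis using zs by simp
  next
    case (snoc ys i)
    then have "wprod alpha ys (alpha i) \<in> Pos"
      using minimal_word_snoc_pos zs by simp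
    moreover have "w = wprod alpha ys \<circ> refl (alpha i)"
      using zs(2) snoc by (simp add: wprod_snoc)
    then have "w (alpha i) = - wprod alpha ys (alpha i)"
      by (simp add: refl_self wprod_minus)
    ultimately show ?thesis
      using pos simple_root_pos not_pos_and_neg by metis
  qed
qed

lemma longest_element_simple_root_neg:
  assumes longest: "longest_element alpha w0"
  shows "- w0 (alpha i) \<in> Pos"
proof (rule ccontr)
  assume "- w0 (alpha i) \<notin> Pos"
  obtain xs where w0: "w0 = wprod alpha xs"
    using longest by (auto simp: longest_element_def weyl_def)
  have pos: "w0 (alpha i) \<in> Pos"
    using root_pos_or_neg[OF wprod_root[OF simple_root]] \<open>- w0 (alpha i) \<notin> Pos\<close> w0 by blast
  have w0_s: "w0 \<circ> refl (alpha i) \<in> weyl alpha"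
    unfolding w0 weyl_def by (metis rangeI wprod_snoc)
  then obtain zs where zs: "length zs = wlength alpha (w0 \<circ> refl (alpha i))"
      "wprod alpha zs = w0 \<circ> refl (alpha i)"
    by (rule obtain_minimal_word)
  have "wprod alpha zs (alpha i) = - w0 (alpha i)"
    using zs(2) by (simp add: refl_self w0 wprod_minus)
  then have "wprod alpha zs (alpha i) \<notin> Pos"
    using pos not_pos_and_neg by simp
  from deletion_condition[OF this] obtain ys where ys: "length ys < length zs"
      "wprod alpha ys = w0 \<circ> refl (alpha i) \<circ> refl (alpha i)"
    using zs(2) by auto
  have "wprod alpha ys = w0"
    using ys(2) by (simp only: o_assoc[symmetric] refl_o_refl o_id)
  then have "wlength alpha w0 < wlength alpha (w0 \<circ> refl (alpha i))"
    using wlength_le[of alpha ys] ys(1) zs(1) by simp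
  moreover have "wlength alpha (w0 \<circ> refl (alpha i)) \<le> wlength alpha w0"
    using longest w0_s by (simp add: longest_element_def)
  ultimately show False
    by simp
qed

lemma linear_pos_roots:
  assumes f: "linear f" and simple: "\<And>i. f (alpha i) \<in> Pos" and "b \<in> Pos" and "f b \<in> R"
  shows "f b \<in> Pos"
proof -
  obtain c where c: "b = (\<Sum>i\<in>UNIV. c i *\<^sub>R alpha i)" "\<forall>i. c i \<ge> 0"
    using \<open>b \<in> Pos\<close> by (auto simp: pos_roots_def)
  obtain d where d: "\<And>i. f (alpha i) = (\<Sum>j\<in>UNIV. d i j *\<^sub>R alpha j)" "\<And>i j. d i j \<ge> 0"
    using simple unfolding pos_roots_def by (simp add: Ball_def) metis
  have "f b = (\<Sum>i\<in>UNIV. \<Sum>j\<in>UNIV. (c i * d i j) *\<^sub>R alpha j)"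
    unfolding c(1) linear_sum[OF f] o_def linear_scale[OF f] d(1) scaleR_sum_right scaleR_scaleR ..
  also have "\<dots> = (\<Sum>j\<in>UNIV. (\<Sum>i\<in>UNIV. c i * d i j) *\<^sub>R alpha j)"
    unfolding scaleR_sum_left by (rule sum.swap)
  finally show ?thesis
    using pos_rootI[OF \<open>f b \<in> R\<close>] c(2) d(2) by (simp add: sum_nonneg)
qed

lemma longest_element_involutive:
  assumes "longest_element alpha w0"
  shows "w0 \<circ> w0 = id"
proof -
  obtain xs where w0: "w0 = wprod alpha xs"
    using assms by (auto simp: longest_element_def weyl_def)
  define f where "f x = - w0 x" for x
  have "linear f"
    unfolding f_def w0 by (rule linear_compose_neg[OF linear_wprod])
  moreover have "f (alpha i) \<in> Pos" for i
    unfolding f_def by (rule longest_element_simple_root_neg[OF assms])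
  moreover have "f b \<in> R" if "b \<in> Pos" for b
    unfolding f_def w0 using that by (intro uminus_root wprod_root pos_root_in_roots)
  ultimately have f_pos: "f b \<in> Pos" if "b \<in> Pos" for b
    using linear_pos_roots that by blast
  have "f (f b) = w0 (w0 b)" for b
    unfolding f_def w0 by (simp add: wprod_minus)
  then have "\<forall>b\<in>Pos. (w0 \<circ> w0) b \<in> Pos"
    using f_pos by (metis comp_apply)
  moreover have "w0 \<circ> w0 \<in> weyl alpha"
    unfolding w0 weyl_def by (metis rangeI wprod_append)
  ultimately show ?thesis
    by (intro weyl_pos_roots_eq_id)
qed

end

lemma rprod_Suc_empty: "rprod alpha ii (Suc N) N = id"
  by (simp add: rprod_def)

lemma rprod_step: "k \<le> N \<Longrightarrow> rprod alpha ii k N = rprod alpha ii (Suc k) N \<circ> refl (alpha (ii k))"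
  by (simp add: rprod_def upt_rec wprod_snoc)

lemma refl_gamma_o_rprod: "refl (gamma alpha ii N k) \<circ> rprod alpha ii (Suc k) N = rprod alpha ii k N"
  if "k \<le> N"
  unfolding gamma_def rprod_step[OF that] unfolding rprod_def by (rule wprod_conjugate)

lemma pi_eq_rprod_sigma:
  fixes pi sigma :: "nat \<Rightarrow> 'a::real_inner \<Rightarrow> 'a"
  assumes "pi (Suc N) = w'" and "sigma (Suc N) = w'"
    and pi: "\<And>k. 1 \<le> k \<Longrightarrow> k \<le> N \<Longrightarrow>
           pi k = (if typeA k then refl (gamma alpha ii N k) \<circ> pi (Suc k) else pi (Suc k))"
    and sigma: "\<And>k. 1 \<le> k \<Longrightarrow> k \<le> N \<Longrightarrow>
           sigma k = (if typeA k then sigma (Suc k) else refl (alpha (ii k)) \<circ> sigma (Suc k))"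
    and "1 \<le> k" "k \<le> Suc N"
  shows "pi k = rprod alpha ii k N \<circ> sigma k"
  using \<open>k \<le> Suc N\<close>
proof (induction rule: inc_induct)
  case base
  then show ?case using assms(1,2) by (simp add: rprod_Suc_empty)
next
  case (step n)
  then have n: "1 \<le> n" "n \<le> N"
    using \<open>1 \<le> k\<close> by auto
  show ?case
  proof (cases "typeA n")
    case True
    have "pi n = refl (gamma alpha ii N n) \<circ> pi (Suc n)"
      using pi[OF n] True by simp
    also have "\<dots> = (refl (gamma alpha ii N n) \<circ> rprod alpha ii (Suc n) N) \<circ> sigma (Suc n)"
      by (simp only: step.IH o_assoc)
    also have "\<dots> = rprod alpha ii n N \<circ> sigma n"
      using sigma[OF n] True by (simp only: refl_gamma_o_rprod[OF n(2)] if_True)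
    finally show ?thesis .
  next
    case False
    have "pi n = rprod alpha ii (Suc n) N \<circ> sigma (Suc n)"
      using pi[OF n] False step.IH by (simp only: if_False)
    also have "\<dots> = rprod alpha ii (Suc n) N \<circ> (refl (alpha (ii n)) \<circ> refl (alpha (ii n))) \<circ> sigma (Suc n)"
      by (simp only: refl_o_refl o_id)
    also have "\<dots> = rprod alpha ii n N \<circ> sigma n"
      unfolding rprod_step[OF n(2)] using sigma[OF n] False by (simp add: o_assoc)
    finally show ?thesis .
  qed
qed

theorem mainTheorem3:
  fixes R :: "'a::euclidean_space set"
    and alpha :: "'i::finite \<Rightarrow> 'a"
    and ii :: "nat \<Rightarrow> 'i" and N :: nat
    and w' :: "'a \<Rightarrow> 'a"
    and typeA :: "nat \<Rightarrow> bool"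
    and pi sigma :: "nat \<Rightarrow> 'a \<Rightarrow> 'a"
  assumes "root_system R" and "irreducible_rs R" and "simple_system R alpha"
    and "reduced_word alpha (map ii [1..<Suc N])"
    and "longest_element alpha (wprod alpha (map ii [1..<Suc N]))"
    and "w' \<in> weyl alpha"
    and "pi (Suc N) = w'"
    and "\<And>k. 1 \<le> k \<Longrightarrow> k \<le> N \<Longrightarrow>
           pi k = (if typeA k then refl (gamma alpha ii N k) \<circ> pi (Suc k) else pi (Suc k))"
    and "sigma (Suc N) = w'"
    and "\<And>k. 1 \<le> k \<Longrightarrow> k \<le> N \<Longrightarrow>
           sigma k = (if typeA k then sigma (Suc k) else refl (alpha (ii k)) \<circ> sigma (Suc k))"
  shows "(\<forall>k\<in>{1..Suc N}. pi k = rprod alpha ii k N \<circ> sigma k)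
         \<and> pi 1 = wprod alpha (map ii [1..<Suc N]) \<circ> sigma 1"
proof -
  interpret based_root_system R alpha
    using assms(1,3) by unfold_locales
  let ?w0 = "wprod alpha (map ii [1..<Suc N])"
  have pi_sigma: "\<forall>k\<in>{1..Suc N}. pi k = rprod alpha ii k N \<circ> sigma k"
    using pi_eq_rprod_sigma[OF assms(7,9,8,10)] by auto
  have "rprod alpha ii 1 N = wprod alpha (rev (map ii [1..<Suc N])) \<circ> (?w0 \<circ> ?w0)"
    using longest_element_involutive[OF assms(5)] by (simp add: rprod_def)
  also have "\<dots> = ?w0"
    by (simp only: o_assoc wprod_rev_o_wprod id_o)
  finally show ?thesis
    using pi_sigma by auto
qed

end
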